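(* Let $K\ge2$. For $\alpha\in\mathbb{R}$ let $s_\alpha(v)=(1-\alpha)v+\frac{\alpha}{K}$ (applied componentwise to vectors), let $q_{\mathrm{L}}:\mathbb{R}^K\to\Delta_{K-1}$ be the softmax map, let $q_{\mathrm{RL},\alpha}(g)=s_\alpha^{-1}(q_{\mathrm{L}}(g))$ for $\alpha\neq1$ (with $k$-th component $q_{\mathrm{RL},\alpha,k}(g)$), and let $D_{\mathrm{SKL},\alpha}(p\|q)=\sum_{k=1}^K s_\alpha(p_k)\ln\frac{s_\alpha(p_k)}{s_\alpha(q_k)}$ for $p,q\in s_\alpha^{-1}(\Delta_{K-1})$. Then: (B1) for $g\in\mathbb{R}^K$ and $k=1,\dots,K$, $q_{\mathrm{RL},\alpha,k}(g)$ can range over $[-\frac{\alpha}{K(1-\alpha)},\frac{K-\alpha}{K(1-\alpha)}]$ if $\alpha\in[0,1)$ and over $[\frac{K-\alpha}{K(1-\alpha)},-\frac{\alpha}{K(1-\alpha)}]$ if $\alpha\in(1,\frac{K}{K-1}]$, and each of these intervals contains $[0,1]$; (B2) $\sum_{k=1}^K q_{\mathrm{RL},\alpha,k}(g)=1$ for all $g\in\mathbb{R}^K$ and all $\alpha\neq1$; (B3) for $\alpha\in[0,1)\cup(1,\frac{K}{K-1}]$ and all $p,q\in s_\alpha^{-1}(\Delta_{K-1})$, $D_{\mathrm{SKL},\alpha}(p\|q)\ge0$, with equality if and only if $p=q$; moreover $D_{\mathrm{SKL},1}(p\|q)=0$ for all $p,q\in s_1^{-1}(\Delta_{K-1})$;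 (B4) for every $\alpha\in[0,\frac{K}{K-1}]$, $D_{\mathrm{SKL},\alpha}(p\|q)$ is jointly convex in $(p,q)$: $D_{\mathrm{SKL},\alpha}(rp_1+(1-r)p_2\|rq_1+(1-r)q_2)\le rD_{\mathrm{SKL},\alpha}(p_1\|q_1)+(1-r)D_{\mathrm{SKL},\alpha}(p_2\|q_2)$ for all $p_1,p_2,q_1,q_2\in s_\alpha^{-1}(\Delta_{K-1})$ and $r\in[0,1]$; (B5) for $\alpha\in[0,1)\cup(1,\frac{K}{K-1}]$, $\operatorname{argmin}_{g\in\mathbb{R}^K,\,g_K=0}D_{\mathrm{SKL},\alpha}((1,0,\dots,0)^\top\|q_{\mathrm{L}}(g))=(\infty,0,\dots,0)^\top$; (B6) $\operatorname{argmin}_{g\in\mathbb{R}^K,\,g_K=0}D_{\mathrm{SKL},\alpha}((1,0,\dots,0)^\top\|q_{\mathrm{RL},\alpha}(g))$ equals $(\infty,0,\dots,0)^\top$ if $\alpha=0$, equals $(\ln(\frac{K}{\alpha}+1-K),0,\dots,0)^\top$ for any $\alpha\in(0,1)\cup(1,\frac{K}{K-1})$, and equals $(-\infty,0,\dots,0)^\top$ if $\alpha=\frac{K}{K-1}$; (B7) for any $\alpha\in(1,\frac{K}{K-1}]$, $p,q\in s_\alpha^{-1}(\Delta_{K-1})$ and $g\in\mathbb{R}^K$: $D_{\mathrm{SKL},\alpha}(p\|q)=D_{\mathrm{SKL},K-(K-1)\alpha}(\frac{\mathbf{1}-p}{K-1}\|\frac{\mathbf{1}-q}{K-1})$, $D_{\mathrm{SKL},\alpha}(p\|q_{\mathrm{RL},\alpha}(g))=D_{\mathrm{SKL},K-(K-1)\alpha}(\frac{\mathbf{1}-p}{K-1}\|q_{\mathrm{RL},K-(K-1)\alpha}(g))$,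 $K-(K-1)\alpha\in[0,1)$, and $\frac{\mathbf{1}-p}{K-1}\in s_{K-(K-1)\alpha}^{-1}(\Delta_{K-1})$; (B8) if $K=2$, then for any $\alpha\in(1,2]$, $p\in s_\alpha^{-1}(\Delta_1)$ and $g\in\mathbb{R}^2$: $D_{\mathrm{SKL},\alpha}(p\|q_{\mathrm{L}}(g))=D_{\mathrm{SKL},2-\alpha}(\mathbf{1}-p\|q_{\mathrm{L}}(-g))=D_{\mathrm{SKL},2-\alpha}(p\|q_{\mathrm{L}}(g))$, $D_{\mathrm{SKL},\alpha}(p\|q_{\mathrm{RL},\alpha}(g))=D_{\mathrm{SKL},2-\alpha}(\mathbf{1}-p\|q_{\mathrm{RL},2-\alpha}(g))=D_{\mathrm{SKL},2-\alpha}(p\|q_{\mathrm{RL},2-\alpha}(-g))$, $2-\alpha\in[0,1)$, and $\mathbf{1}-p\in s_{2-\alpha}^{-1}(\Delta_1)$.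
   Context: $\Delta_{K-1}=\{p\in\mathbb{R}^K: p_k\ge0,\ \sum_k p_k=1\}$ is the probability simplex and $\mathbf{1}=(1,\dots,1)^\top\in\mathbb{R}^K$. The smoothing map is $s_\alpha(v)=(1-\alpha)v+\frac{\alpha}{K}$ for scalars, applied componentwise to vectors $v\in\mathbb{R}^K$; for $\alpha\ne1$ its inverse is $s_\alpha^{-1}(u)=(u-\frac{\alpha}{K})/(1-\alpha)$ componentwise. The set $s_\alpha^{-1}(\Delta_{K-1})$ is $\{v\in\mathbb{R}^K: s_\alpha(v)\in\Delta_{K-1}\}$ (for $\alpha\neq1$ this is the image of $\Delta_{K-1}$ under $s_\alpha^{-1}$; for $\alpha=1$ it is all of $\mathbb{R}^K$). The softmax (logit model) is $q_{\mathrm{L}}(g)=\big(e^{g_1}/\sum_l e^{g_l},\dots,e^{g_K}/\sum_l e^{g_l}\big)^\top$ and the roughened logit model is $q_{\mathrm{RL},\alpha}(g)=s_\alpha^{-1}(q_{\mathrm{L}}(g))$. The smoothed KL divergence is $D_{\mathrm{SKL},\alpha}(p\|q)=\sum_k s_\alpha(p_k)\ln\frac{s_\alpha(p_k)}{s_\alpha(q_k)}$ with the conventions $0\ln(0/c)=0$ and $c\ln(c/0)=+\infty$ for $c>0$; for $\alpha=0$ it is the KL divergence. In (B5)–(B6), minimizers are understood with coordinates in the extended real line, the maps $q_{\mathrm{L}},q_{\mathrm{RL},\alpha}$ being extended by continuity (e.g. $(\pm\infty,0,\dots,0)^\top$ denotes the limit $g_1\to\pm\infty$ with the remaining coordinates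 $0$). For $K=2$, $\mathbf{1}-p=(1-p_1,1-p_2)^\top$. *)

theory Defs
  imports "HOL-Analysis.Analysis"
begin

text \<open>Vectors in R^K are represented as functions nat => real; only the
  coordinates 0..K-1 (paper's 1..K) are meaningful.\<close>

definition smooth :: "nat \<Rightarrow> real \<Rightarrow> real \<Rightarrow> real" where
  "smooth K \<alpha> v = (1 - \<alpha>) * v + \<alpha> / real K"

definition prob_simplex :: "nat \<Rightarrow> (nat \<Rightarrow> real) set" where
  "prob_simplex K = {p. (\<forall>k<K. 0 \<le> p k) \<and> (\<Sum>k<K. p k) = 1}"

definition smooth_pre :: "nat \<Rightarrow> real \<Rightarrow> (nat \<Rightarrow> real) set" where
  "smooth_pre K \<alpha> = {v. (\<lambda>k. smooth K \<alpha> (v k)) \<in> prob_simplex K}"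

definition qL :: "nat \<Rightarrow> (nat \<Rightarrow> real) \<Rightarrow> (nat \<Rightarrow> real)" where
  "qL K g = (\<lambda>k. exp (g k) / (\<Sum>l<K. exp (g l)))"

definition qRL :: "nat \<Rightarrow> real \<Rightarrow> (nat \<Rightarrow> real) \<Rightarrow> (nat \<Rightarrow> real)" where
  "qRL K \<alpha> g = (\<lambda>k. (qL K g k - \<alpha> / real K) / (1 - \<alpha>))"

definition skl_term :: "real \<Rightarrow> real \<Rightarrow> ereal" where
  "skl_term c d = (if c = 0 then 0 else if d = 0 then \<infinity> else ereal (c * ln (c / d)))"

definition DSKL :: "nat \<Rightarrow> real \<Rightarrow> (nat \<Rightarrow> real) \<Rightarrow> (nat \<Rightarrow> real) \<Rightarrow> ereal" where
  "DSKL K \<alpha> p q = (\<Sum>k<K. skl_term (smooth K \<alpha> (p k)) (smooth K \<alpha> (q k)))"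

end

theory Submission
  imports Defs
begin

(* Everything happens on the smoothed vectors s_alpha(p), s_alpha(q), which lie in the
   probability simplex whenever p, q lie in s_alpha^-1(Delta), and D_SKL is the KL divergence
   between them. Nonnegativity and the equality case are Gibbs' inequality (termwise
   c - d <= c ln (c/d)); joint convexity is the log-sum inequality, i.e. subadditivity and
   positive homogeneity of (c, d) |-> c ln (c/d).
   Since s_alpha(q_RL,alpha(g)) = q_L(g), minimising D(e_1 || q_RL,alpha(g)) means matching the
   softmax q_L(g) with s_alpha(e_1) = (1 - alpha + alpha/K, alpha/K, ..., alpha/K). For
   0 < alpha < K/(K-1) this target has positive entries and, the softmax being injective up to
   shifts of g, it is attained exactly at g_1 = ln (K/alpha + 1 - K); at alpha = 0 and
   alpha = K/(K-1) (and for q_L in place of q_RL) one entry of the target lies on the boundary of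
   the simplex, so the infimum 0 is only approached as g_1 -> +-infinity.
   The symmetry alpha |-> K - (K-1) alpha comes from the identity
   s_{K-(K-1)alpha}((1 - x)/(K-1)) = s_alpha(x). *)

section \<open>The summand c ln (c / d)\<close>

lemma skl_term_eq_ereal: "c = 0 \<or> 0 < d \<Longrightarrow> skl_term c d = ereal (c * ln (c / d))"
  by (auto simp: skl_term_def)

lemma skl_term_eq_infinity_iff: "skl_term c d = \<infinity> \<longleftrightarrow> c \<noteq> 0 \<and> d = 0"
  by (simp add: skl_term_def)

lemma skl_term_neq_minf: "skl_term c d \<noteq> -\<infinity>"
  by (simp add: skl_term_def)

lemma skl_term_self: "skl_term c c = 0"
  by (simp add: skl_term_def)

lemma diff_le_mult_ln_div:
  fixes c d :: real
  assumes "0 < c" "0 < d"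
  shows "c - d \<le> c * ln (c / d)" and "c * ln (c / d) = c - d \<longleftrightarrow> c = d"
proof -
  have gap: "c * ln (c / d) - (c - d) = c * ((d / c - 1) - ln (d / c))"
    using assms by (simp add: ln_div field_simps)
  have "ln (d / c) \<le> d / c - 1"
    using assms by (intro ln_le_minus_one) simp
  then have "0 \<le> c * ((d / c - 1) - ln (d / c))"
    using assms by simp
  then show "c - d \<le> c * ln (c / d)"
    using gap by linarith
  have "ln (d / c) = d / c - 1 \<longleftrightarrow> d / c = 1"
    using assms ln_eq_minus_one[of "d / c"] by auto
  then show "c * ln (c / d) = c - d \<longleftrightarrow> c = d"
    using gap assms by auto
qed

lemma skl_term_ge_diff: "0 \<le> c \<Longrightarrow> 0 \<le> d \<Longrightarrow> ereal (c - d) \<le> skl_term c d"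
  using diff_le_mult_ln_div(1)[of c d] by (auto simp: skl_term_def)

lemma skl_term_eq_diff_iff: "0 \<le> c \<Longrightarrow> 0 \<le> d \<Longrightarrow> skl_term c d = ereal (c - d) \<longleftrightarrow> c = d"
  using diff_le_mult_ln_div(2)[of c d] by (auto simp: skl_term_def)

lemma sum_skl_term_nonneg:
  assumes "\<forall>k\<in>I. 0 \<le> P k" "\<forall>k\<in>I. 0 \<le> Q k" "sum P I = sum Q I"
  shows "0 \<le> (\<Sum>k\<in>I. skl_term (P k) (Q k))"
proof -
  have "(\<Sum>k\<in>I. ereal (P k - Q k)) \<le> (\<Sum>k\<in>I. skl_term (P k) (Q k))"
    using assms by (intro sum_mono skl_term_ge_diff) auto
  moreover have "(\<Sum>k\<in>I. ereal (P k - Q k)) = 0"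
    using assms(3) by (simp add: sum_subtractf)
  ultimately show ?thesis by metis
qed

lemma sum_skl_term_eq_0_iff:
  assumes "finite I" "\<forall>k\<in>I. 0 \<le> P k" "\<forall>k\<in>I. 0 \<le> Q k" "sum P I = sum Q I"
  shows "(\<Sum>k\<in>I. skl_term (P k) (Q k)) = 0 \<longleftrightarrow> (\<forall>k\<in>I. P k = Q k)"
proof
  assume sum_0: "(\<Sum>k\<in>I. skl_term (P k) (Q k)) = 0"
  define excess where "excess k = skl_term (P k) (Q k) + ereal (Q k - P k)" for k
  have excess_nonneg: "0 \<le> excess k" if "k \<in> I" for k
    using skl_term_ge_diff[of "P k" "Q k"] assms(2,3) that unfolding excess_def
    by (cases "skl_term (P k) (Q k)") auto
  have "sum excess I = (\<Sum>k\<in>I. skl_term (P k) (Q k)) + ereal (sum Q I - sum P I)"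
    unfolding excess_def by (simp add: sum.distrib sum_subtractf)
  then have "sum excess I = 0"
    using sum_0 assms(4) by simp
  then have "\<forall>k\<in>I. excess k = 0"
    using sum_nonneg_eq_0_iff[OF assms(1)] excess_nonneg by blast
  then have "skl_term (P k) (Q k) = ereal (P k - Q k)" if "k \<in> I" for k
    using that unfolding excess_def by (cases "skl_term (P k) (Q k)") auto
  then show "\<forall>k\<in>I. P k = Q k"
    using skl_term_eq_diff_iff assms(2,3) by blast
qed (simp add: skl_term_self)

lemma mult_ln_div_ge_tangent:
  fixes x u a :: real
  assumes "0 \<le> x" "0 \<le> u" "x = 0 \<or> 0 < u" "0 < a"
  shows "x * ln a + x - u * a \<le> x * ln (x / u)"
proof (cases "x = 0")
  case False
  then have "0 < x" "0 < u" using assms by auto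
  then have "x - u * a \<le> x * ln (x / (u * a))"
    using assms by (intro diff_le_mult_ln_div(1)) auto
  also have "x * ln (x / (u * a)) = x * ln (x / u) - x * ln a"
    using \<open>0 < x\<close> \<open>0 < u\<close> assms by (simp add: ln_div ln_mult algebra_simps)
  finally show ?thesis by simp
qed (use assms in simp)

lemma skl_term_add_le:
  assumes "0 \<le> x" "0 \<le> y" "0 \<le> u" "0 \<le> v"
  shows "skl_term (x + y) (u + v) \<le> skl_term x u + skl_term y v"
proof (cases "(x \<noteq> 0 \<and> u = 0) \<or> (y \<noteq> 0 \<and> v = 0)")
  case True
  then have "skl_term x u = \<infinity> \<or> skl_term y v = \<infinity>"
    by (auto simp: skl_term_eq_infinity_iff)
  then have "skl_term x u + skl_term y v = \<infinity>"
    using skl_term_neq_minf by auto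
  then show ?thesis by (metis ereal_less_eq(1))
next
  case finite: False
  show ?thesis
  proof (cases "x + y = 0")
    case True
    then show ?thesis using assms by (simp add: skl_term_def)
  next
    case False
    define a where "a = (x + y) / (u + v)"
    have "0 < u + v" "0 < x + y"
      using assms finite False by auto
    then have "0 < a" unfolding a_def by simp
    have "x * ln a + x - u * a \<le> x * ln (x / u)" "y * ln a + y - v * a \<le> y * ln (y / v)"
      using assms finite \<open>0 < a\<close> by (intro mult_ln_div_ge_tangent; auto)+
    moreover have "(u + v) * a = x + y"
      using \<open>0 < u + v\<close> unfolding a_def by simp
    ultimately have "(x + y) * ln a \<le> x * ln (x / u) + y * ln (y / v)"
      by (simp add: algebra_simps)
    moreover have "skl_term x u + skl_term y v = ereal (x * ln (x / u) + y * ln (y / v))"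
      using finite by (auto simp: skl_term_def)
    ultimately show ?thesis
      using \<open>0 < u + v\<close> by (simp add: skl_term_eq_ereal a_def)
  qed
qed

lemma skl_term_scale: "0 < r \<Longrightarrow> skl_term (r * c) (r * d) = ereal r * skl_term c d"
  by (simp add: skl_term_def)

lemma skl_term_convex:
  assumes "0 \<le> a1" "0 \<le> a2" "0 \<le> b1" "0 \<le> b2" "0 \<le> r" "r \<le> 1"
  shows "skl_term (r * a1 + (1 - r) * a2) (r * b1 + (1 - r) * b2)
           \<le> ereal r * skl_term a1 b1 + ereal (1 - r) * skl_term a2 b2"
proof -
  consider "r = 0" | "r = 1" | "0 < r" "r < 1"
    using assms(5,6) by linarith
  then show ?thesis
  proof cases
    case 3
    then have "skl_term (r * a1 + (1 - r) * a2) (r * b1 + (1 - r) * b2)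
                \<le> skl_term (r * a1) (r * b1) + skl_term ((1 - r) * a2) ((1 - r) * b2)"
      using assms by (intro skl_term_add_le) auto
    then show ?thesis
      using 3 by (simp add: skl_term_scale)
  qed (simp_all add: zero_ereal_def[symmetric] one_ereal_def[symmetric])
qed

section \<open>Smoothing and the smoothed KL divergence\<close>

lemma smooth_inj: "\<alpha> \<noteq> 1 \<Longrightarrow> smooth K \<alpha> x = smooth K \<alpha> y \<longleftrightarrow> x = y"
  by (auto simp: smooth_def)

lemma smooth_convex_combination:
  "smooth K \<alpha> (r * x + (1 - r) * y) = r * smooth K \<alpha> x + (1 - r) * smooth K \<alpha> y"
  unfolding smooth_def by (simp add: algebra_simps flip: add_divide_distrib)

lemma sum_smooth: "0 < K \<Longrightarrow> (\<Sum>k<K. smooth K \<alpha> (v k)) = (1 - \<alpha>) * (\<Sum>k<K. v k) + \<alpha>"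
  by (simp add: smooth_def sum.distrib sum_distrib_left)

lemma one_le_div_pred: "2 \<le> K \<Longrightarrow> 1 \<le> real K / (real K - 1)"
  by (simp add: le_divide_eq)

lemma smooth_unit_interval:
  assumes "2 \<le> K" "0 \<le> \<alpha>" "\<alpha> \<le> real K / (real K - 1)" "0 \<le> x" "x \<le> 1"
  shows "0 \<le> smooth K \<alpha> x" "smooth K \<alpha> x \<le> 1"
proof -
  have "\<alpha> * (real K - 1) \<le> real K"
    using assms(1,3) by (simp add: le_divide_eq)
  moreover have "\<alpha> \<le> \<alpha> * (real K - 1)"
    using assms(1,2) by (simp add: mult_le_cancel_left1)
  ultimately have "0 \<le> smooth K \<alpha> 1" "smooth K \<alpha> 1 \<le> 1" "0 \<le> smooth K \<alpha> 0" "smooth K \<alpha> 0 \<le> 1"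
    using assms(1,2) by (auto simp: smooth_def field_simps)
  moreover have "smooth K \<alpha> x = x * smooth K \<alpha> 1 + (1 - x) * smooth K \<alpha> 0"
    using smooth_convex_combination[of K \<alpha> x 1 0] by simp
  ultimately show "0 \<le> smooth K \<alpha> x" "smooth K \<alpha> x \<le> 1"
    using assms(4,5) by (auto intro: convex_bound_le)
qed

lemma smooth_pre_iff:
  "p \<in> smooth_pre K \<alpha> \<longleftrightarrow> (\<forall>k<K. 0 \<le> smooth K \<alpha> (p k)) \<and> (\<Sum>k<K. smooth K \<alpha> (p k)) = 1"
  by (simp add: smooth_pre_def prob_simplex_def)

lemma smooth_pre_sum:
  assumes "p \<in> smooth_pre K \<alpha>" "\<alpha> \<noteq> 1" "0 < K"
  shows "(\<Sum>k<K. p k) = 1"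
proof -
  have "(1 - \<alpha>) * (\<Sum>k<K. p k) + \<alpha> = 1"
    using assms(1,3) sum_smooth[of K \<alpha> p] by (simp add: smooth_pre_iff)
  then have "(1 - \<alpha>) * ((\<Sum>k<K. p k) - 1) = 0"
    by (simp add: algebra_simps)
  then show ?thesis
    using assms(2) by simp
qed

lemma DSKL_nonneg: "p \<in> smooth_pre K \<alpha> \<Longrightarrow> q \<in> smooth_pre K \<alpha> \<Longrightarrow> 0 \<le> DSKL K \<alpha> p q"
  unfolding DSKL_def smooth_pre_iff by (intro sum_skl_term_nonneg) auto

lemma DSKL_eq_0_iff:
  assumes "p \<in> smooth_pre K \<alpha>" "q \<in> smooth_pre K \<alpha>" "\<alpha> \<noteq> 1"
  shows "DSKL K \<alpha> p q = 0 \<longleftrightarrow> (\<forall>k<K. p k = q k)"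
  using assms sum_skl_term_eq_0_iff[of "{..<K}" "\<lambda>k. smooth K \<alpha> (p k)" "\<lambda>k. smooth K \<alpha> (q k)"]
  by (simp add: DSKL_def smooth_pre_iff smooth_inj) blast

lemma DSKL_smooth_one: "DSKL K 1 p q = 0"
  by (simp add: DSKL_def smooth_def skl_term_self)

lemma DSKL_convex:
  assumes "p1 \<in> smooth_pre K \<alpha>" "p2 \<in> smooth_pre K \<alpha>" "q1 \<in> smooth_pre K \<alpha>" "q2 \<in> smooth_pre K \<alpha>"
    and "0 \<le> r" "r \<le> 1"
  shows "DSKL K \<alpha> (\<lambda>k. r * p1 k + (1 - r) * p2 k) (\<lambda>k. r * q1 k + (1 - r) * q2 k)
           \<le> ereal r * DSKL K \<alpha> p1 q1 + ereal (1 - r) * DSKL K \<alpha> p2 q2"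
proof -
  let ?s = "smooth K \<alpha>"
  have "DSKL K \<alpha> (\<lambda>k. r * p1 k + (1 - r) * p2 k) (\<lambda>k. r * q1 k + (1 - r) * q2 k)
          \<le> (\<Sum>k<K. ereal r * skl_term (?s (p1 k)) (?s (q1 k))
                    + ereal (1 - r) * skl_term (?s (p2 k)) (?s (q2 k)))"
    unfolding DSKL_def smooth_convex_combination
    using assms by (intro sum_mono skl_term_convex) (auto simp: smooth_pre_iff)
  also have "\<dots> = ereal r * DSKL K \<alpha> p1 q1 + ereal (1 - r) * DSKL K \<alpha> p2 q2"
  proof -
    have factor: "(\<Sum>k<K. ereal c * f k) = ereal c * sum f {..<K}" if "0 \<le> c" for c f
      using sum_distrib_right_ereal[of c f] that by (simp add: mult.commute)
    show ?thesis
      using assms(5,6) by (simp add: DSKL_def sum.distrib factor)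
  qed
  finally show ?thesis .
qed

section \<open>Softmax and roughened logits\<close>

lemma qL_pos: "0 < K \<Longrightarrow> 0 < qL K g k"
  unfolding qL_def by (intro divide_pos_pos sum_pos) auto

lemma sum_qL: "0 < K \<Longrightarrow> (\<Sum>k<K. qL K g k) = 1"
proof -
  assume "0 < K"
  then have "0 < (\<Sum>l<K. exp (g l))"
    by (intro sum_pos) auto
  then show ?thesis
    unfolding qL_def by (simp flip: sum_divide_distrib)
qed

lemma qL_less_one:
  assumes "2 \<le> K" "k < K"
  shows "qL K g k < 1"
proof -
  have "(if k = 0 then 1 else 0) \<in> {..<K} - {k}"
    using assms by auto
  then have "{..<K} - {k} \<noteq> {}"
    by blast
  then have "0 < (\<Sum>l\<in>{..<K} - {k}. qL K g l)"
    using assms qL_pos[of K] by (intro sum_pos) auto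
  moreover have "(\<Sum>k<K. qL K g k) = qL K g k + (\<Sum>l\<in>{..<K} - {k}. qL K g l)"
    using assms(2) by (intro sum.remove) auto
  ultimately show ?thesis
    using assms sum_qL[of K g] by simp
qed

lemma sum_if_eq_else:
  fixes a b :: real
  assumes "j < K"
  shows "(\<Sum>l<K. if l = j then a else b) = a + (real K - 1) * b"
proof -
  have "(\<Sum>l<K. if l = j then a else b) = (\<Sum>l<K. b + (if l = j then a - b else 0))"
    by (intro sum.cong) auto
  then show ?thesis
    using assms by (simp add: sum.distrib algebra_simps)
qed

lemma qL_indicator:
  assumes "j < K"
  shows "qL K (\<lambda>l. if l = j then t else 0) k = (if k = j then exp t else 1) / (exp t + (real K - 1))"
proof -
  have "(\<Sum>l<K. exp (if l = j then t else 0)) = (\<Sum>l<K. if l = j then exp t else 1)"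
    by (intro sum.cong) auto
  then show ?thesis
    using assms by (simp add: qL_def sum_if_eq_else)
qed

lemma range_qL_coordinate:
  assumes "2 \<le> K" "k < K"
  shows "range (\<lambda>g. qL K g k) = {0<..<1}"
proof
  show "range (\<lambda>g. qL K g k) \<subseteq> {0<..<1}"
    using assms qL_pos[of K] qL_less_one by fastforce
  show "{0<..<1} \<subseteq> range (\<lambda>g. qL K g k)"
  proof
    fix x :: real
    assume x: "x \<in> {0<..<1}"
    define t where "t = ln (x * (real K - 1) / (1 - x))"
    have exp_t: "exp t = x * (real K - 1) / (1 - x)"
      using x assms(1) unfolding t_def by (intro exp_ln) auto
    have "exp t + (real K - 1) = (real K - 1) / (1 - x)"
      using x unfolding exp_t by (simp add: field_simps)
    then have "qL K (\<lambda>l. if l = k then t else 0) k = x"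
      using x assms(1) unfolding qL_indicator[OF assms(2)] exp_t by simp
    then show "x \<in> range (\<lambda>g. qL K g k)"
      by (metis rangeI)
  qed
qed

lemma qL_eq_qL_iff:
  assumes "0 < K"
  shows "(\<forall>k<K. qL K g k = qL K h k) \<longleftrightarrow> (\<exists>c. \<forall>k<K. g k = h k + c)"
proof
  define Sg Sh where "Sg = (\<Sum>l<K. exp (g l))" and "Sh = (\<Sum>l<K. exp (h l))"
  have "0 < Sg" "0 < Sh"
    using assms unfolding Sg_def Sh_def by (auto intro: sum_pos)
  assume "\<forall>k<K. qL K g k = qL K h k"
  then have "exp (g k) = exp (h k + ln (Sg / Sh))" if "k < K" for k
    using that \<open>0 < Sg\<close> \<open>0 < Sh\<close> by (simp add: qL_def exp_add field_simps flip: Sg_def Sh_def)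
  then show "\<exists>c. \<forall>k<K. g k = h k + c"
    by blast
next
  assume "\<exists>c. \<forall>k<K. g k = h k + c"
  then obtain c where c: "\<forall>k<K. g k = h k + c" ..
  then have "(\<Sum>l<K. exp (g l)) = exp c * (\<Sum>l<K. exp (h l))"
    by (simp add: exp_add sum_distrib_left mult.commute)
  then show "\<forall>k<K. qL K g k = qL K h k"
    using c by (simp add: qL_def exp_add)
qed

lemma tendsto_qL_indicator_at_top:
  assumes "0 < K" "k < K"
  shows "((\<lambda>t. qL K (\<lambda>l. if l = 0 then t else 0) k) \<longlongrightarrow> (if k = 0 then 1 else 0)) at_top"
proof -
  have exp_neg: "((\<lambda>t. exp (- t)) \<longlongrightarrow> (0::real)) at_top"
    by (rule filterlim_compose[OF exp_at_bot filterlim_uminus_at_bot_at_top])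
  have denom: "exp t + (real K - 1) = exp t * (1 + (real K - 1) * exp (- t))" for t
    by (simp add: field_simps exp_minus_inverse)
  show ?thesis
  proof (cases "k = 0")
    case True
    have "((\<lambda>t. 1 / (1 + (real K - 1) * exp (- t))) \<longlongrightarrow> 1 / (1 + (real K - 1) * 0)) at_top"
      by (intro tendsto_intros exp_neg) simp
    then show ?thesis
      using assms True by (simp add: qL_indicator denom)
  next
    case False
    have "((\<lambda>t. exp (- t) / (1 + (real K - 1) * exp (- t))) \<longlongrightarrow> 0 / (1 + (real K - 1) * 0)) at_top"
      by (intro tendsto_intros exp_neg) simp
    then show ?thesis
      using assms False by (simp add: qL_indicator denom exp_minus field_simps)
  qed
qed

lemma tendsto_qL_indicator_at_bot:
  assumes "2 \<le> K" "k < K"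
  shows "((\<lambda>t. qL K (\<lambda>l. if l = 0 then t else 0) k) \<longlongrightarrow> (if k = 0 then 0 else 1 / (real K - 1))) at_bot"
proof -
  have exp: "((\<lambda>t. exp t) \<longlongrightarrow> (0::real)) at_bot"
    using exp_at_bot by simp
  have "((\<lambda>t. exp t / (exp t + (real K - 1))) \<longlongrightarrow> 0 / (0 + (real K - 1))) at_bot"
       "((\<lambda>t. 1 / (exp t + (real K - 1))) \<longlongrightarrow> 1 / (0 + (real K - 1))) at_bot"
    using assms(1) by (intro tendsto_intros exp; simp)+
  then show ?thesis
    using assms by (simp add: qL_indicator)
qed

definition smooth_inv :: "nat \<Rightarrow> real \<Rightarrow> real \<Rightarrow> real" where
  "smooth_inv K \<alpha> u = (u - \<alpha> / real K) / (1 - \<alpha>)"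

lemma qRL_eq_smooth_inv: "qRL K \<alpha> g k = smooth_inv K \<alpha> (qL K g k)"
  by (simp add: qRL_def smooth_inv_def)

lemma smooth_smooth_inv: "\<alpha> \<noteq> 1 \<Longrightarrow> smooth K \<alpha> (smooth_inv K \<alpha> u) = u"
  by (simp add: smooth_def smooth_inv_def)

lemma smooth_inv_smooth: "\<alpha> \<noteq> 1 \<Longrightarrow> smooth_inv K \<alpha> (smooth K \<alpha> v) = v"
  by (simp add: smooth_def smooth_inv_def field_simps)

lemma smooth_qRL: "\<alpha> \<noteq> 1 \<Longrightarrow> smooth K \<alpha> (qRL K \<alpha> g k) = qL K g k"
  by (simp add: qRL_eq_smooth_inv smooth_smooth_inv)

lemma qRL_in_smooth_pre:
  assumes "0 < K" "\<alpha> \<noteq> 1"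
  shows "qRL K \<alpha> g \<in> smooth_pre K \<alpha>"
proof -
  have "\<forall>k<K. 0 \<le> qL K g k" "(\<Sum>k<K. qL K g k) = 1"
    using assms(1) qL_pos[of K g] sum_qL[of K g] by (auto simp: less_imp_le)
  then show ?thesis
    using assms(2) by (simp add: smooth_pre_iff smooth_qRL)
qed

lemma sum_qRL:
  assumes "0 < K" "\<alpha> \<noteq> 1"
  shows "(\<Sum>k<K. qRL K \<alpha> g k) = 1"
  using smooth_pre_sum[OF qRL_in_smooth_pre[OF assms] assms(2,1)] .

lemma smooth_inv_image_unit_interval:
  assumes "\<alpha> \<noteq> 1"
  shows "smooth_inv K \<alpha> ` {0<..<1} = open_segment (smooth_inv K \<alpha> 0) (smooth_inv K \<alpha> 1)"
    and "smooth_inv K \<alpha> ` {0..1} = closed_segment (smooth_inv K \<alpha> 0) (smooth_inv K \<alpha> 1)"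
proof -
  define lo hi where "lo = smooth_inv K \<alpha> 0" and "hi = smooth_inv K \<alpha> 1"
  have affine: "smooth_inv K \<alpha> u = (1 - u) *\<^sub>R lo + u *\<^sub>R hi" for u
  proof -
    have "(1 - u) * (0 - \<alpha> / real K) + u * (1 - \<alpha> / real K) = u - \<alpha> / real K"
      by algebra
    then show ?thesis
      unfolding smooth_inv_def lo_def hi_def real_scaleR_def
      by (metis add_divide_distrib times_divide_eq_right)
  qed
  have "hi - lo = 1 / (1 - \<alpha>)"
    unfolding smooth_inv_def lo_def hi_def diff_divide_distrib[symmetric] by simp
  then have "lo \<noteq> hi"
    using assms by auto
  then show "smooth_inv K \<alpha> ` {0<..<1} = open_segment lo hi"
            "smooth_inv K \<alpha> ` {0..1} = closed_segment lo hi"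
    unfolding affine[abs_def] by (simp_all add: segment_image_interval)
qed

lemma range_qRL_coordinate:
  assumes "2 \<le> K" "k < K" "\<alpha> \<noteq> 1"
  shows "range (\<lambda>g. qRL K \<alpha> g k) = open_segment (smooth_inv K \<alpha> 0) (smooth_inv K \<alpha> 1)"
proof -
  have "range (\<lambda>g. qRL K \<alpha> g k) = smooth_inv K \<alpha> ` range (\<lambda>g. qL K g k)"
    by (simp add: qRL_eq_smooth_inv image_image)
  then show ?thesis
    using assms by (simp add: range_qL_coordinate smooth_inv_image_unit_interval)
qed

lemma qRL_coordinate_bounds:
  assumes "2 \<le> K" "k < K" "0 \<le> \<alpha>" "\<alpha> \<le> real K / (real K - 1)" "\<alpha> \<noteq> 1"
  defines "lo \<equiv> - \<alpha> / (real K * (1 - \<alpha>))" and "hi \<equiv> (real K - \<alpha>) / (real K * (1 - \<alpha>))"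
  shows "range (\<lambda>g. qRL K \<alpha> g k) \<subseteq> closed_segment lo hi"
    and "closure (range (\<lambda>g. qRL K \<alpha> g k)) = closed_segment lo hi"
    and "{0..1} \<subseteq> closed_segment lo hi"
proof -
  have "1 - \<alpha> / real K = (real K - \<alpha>) / real K"
    using assms(1) by (simp add: field_simps)
  then have ends: "smooth_inv K \<alpha> 0 = lo" "smooth_inv K \<alpha> 1 = hi"
    by (simp_all add: smooth_inv_def lo_def hi_def)
  have "lo \<noteq> hi"
    using smooth_inv_image_unit_interval(1)[OF assms(5), of K] by (auto simp: ends)
  show "range (\<lambda>g. qRL K \<alpha> g k) \<subseteq> closed_segment lo hi"
    using assms(1,2,5) segment_open_subset_closed by (simp add: range_qRL_coordinate ends)
  show "closure (range (\<lambda>g. qRL K \<alpha> g k)) = closed_segment lo hi"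
    using assms(1,2,5) \<open>lo \<noteq> hi\<close> by (simp add: range_qRL_coordinate ends)
  have "x \<in> smooth_inv K \<alpha> ` {0..1}" if "x \<in> {0..1}" for x
  proof (rule rev_image_eqI)
    show "smooth K \<alpha> x \<in> {0..1}"
      using that smooth_unit_interval[OF assms(1,3,4)] by auto
  qed (simp add: smooth_inv_smooth assms(5))
  then have "{0..1} \<subseteq> smooth_inv K \<alpha> ` {0..1}"
    by blast
  then show "{0..1} \<subseteq> closed_segment lo hi"
    by (simp only: smooth_inv_image_unit_interval(2)[OF assms(5)] ends)
qed

lemma qRL_coordinate_bounds_below_one:
  assumes "2 \<le> K" "0 \<le> \<alpha>" "\<alpha> < 1"
  shows "(\<forall>k<K. (\<lambda>g. qRL K \<alpha> g k) ` UNIV \<subseteq>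
                 {- \<alpha> / (real K * (1 - \<alpha>)) .. (real K - \<alpha>) / (real K * (1 - \<alpha>))}
            \<and> closure ((\<lambda>g. qRL K \<alpha> g k) ` UNIV) =
                 {- \<alpha> / (real K * (1 - \<alpha>)) .. (real K - \<alpha>) / (real K * (1 - \<alpha>))})
      \<and> {0..1} \<subseteq> {- \<alpha> / (real K * (1 - \<alpha>)) .. (real K - \<alpha>) / (real K * (1 - \<alpha>))}"
    (is "(\<forall>k<K. ?range k \<subseteq> {?lo..?hi} \<and> closure (?range k) = {?lo..?hi}) \<and> {0..1} \<subseteq> {?lo..?hi}")
proof -
  have "\<alpha> \<le> real K / (real K - 1)"
    using one_le_div_pred[OF assms(1)] assms(3) by linarith
  moreover have "closed_segment ?lo ?hi = {?lo..?hi}"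
    using assms by (intro closed_segment_eq_real_ivl1 divide_right_mono) auto
  ultimately show ?thesis
    using assms qRL_coordinate_bounds(1,2)[of K _ \<alpha>] qRL_coordinate_bounds(3)[of K 0 \<alpha>] by simp
qed

lemma qRL_coordinate_bounds_above_one:
  assumes "2 \<le> K" "1 < \<alpha>" "\<alpha> \<le> real K / (real K - 1)"
  shows "(\<forall>k<K. (\<lambda>g. qRL K \<alpha> g k) ` UNIV \<subseteq>
                 {(real K - \<alpha>) / (real K * (1 - \<alpha>)) .. - \<alpha> / (real K * (1 - \<alpha>))}
            \<and> closure ((\<lambda>g. qRL K \<alpha> g k) ` UNIV) =
                 {(real K - \<alpha>) / (real K * (1 - \<alpha>)) .. - \<alpha> / (real K * (1 - \<alpha>))})
      \<and> {0..1} \<subseteq> {(real K - \<alpha>) / (real K * (1 - \<alpha>)) .. - \<alpha> / (real K * (1 - \<alpha>))}"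
    (is "(\<forall>k<K. ?range k \<subseteq> {?hi..?lo} \<and> closure (?range k) = {?hi..?lo}) \<and> {0..1} \<subseteq> {?hi..?lo}")
proof -
  have "real K * (1 - \<alpha>) < 0"
    using assms by (simp add: mult_pos_neg)
  then have "closed_segment ?hi ?lo = {?hi..?lo}"
    using assms by (intro closed_segment_eq_real_ivl1 divide_right_mono_neg) auto
  then have "closed_segment ?lo ?hi = {?hi..?lo}"
    by (simp add: closed_segment_commute)
  then show ?thesis
    using assms qRL_coordinate_bounds(1,2)[of K _ \<alpha>] qRL_coordinate_bounds(3)[of K 0 \<alpha>] by simp
qed

section \<open>Minimising against a one-hot target\<close>

lemma prob_simplex_subset_smooth_pre:
  assumes "2 \<le> K" "0 \<le> \<alpha>" "\<alpha> \<le> real K / (real K - 1)"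
  shows "prob_simplex K \<subseteq> smooth_pre K \<alpha>"
proof
  fix p
  assume p: "p \<in> prob_simplex K"
  have "p k \<le> 1" if "k < K" for k
    using p that member_le_sum[of k "{..<K}" p] by (auto simp: prob_simplex_def)
  then have "\<forall>k<K. 0 \<le> smooth K \<alpha> (p k)"
    using p assms smooth_unit_interval(1) by (auto simp: prob_simplex_def)
  moreover have "(\<Sum>k<K. smooth K \<alpha> (p k)) = 1"
    using p assms(1) by (simp add: sum_smooth prob_simplex_def)
  ultimately show "p \<in> smooth_pre K \<alpha>"
    by (simp add: smooth_pre_iff)
qed

lemma qL_in_prob_simplex: "0 < K \<Longrightarrow> qL K g \<in> prob_simplex K"
  by (simp add: prob_simplex_def sum_qL qL_pos less_imp_le)

lemma indicator_in_prob_simplex: "j < K \<Longrightarrow> (\<lambda>k. if k = j then 1 else 0) \<in> prob_simplex K"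
  by (simp add: prob_simplex_def)

lemma INF_eq_0_if_tendsto:
  fixes f :: "'a \<Rightarrow> ereal"
  assumes "\<And>h. h \<in> A \<Longrightarrow> 0 \<le> f h" "\<And>t. u t \<in> A" "((\<lambda>t. f (u t)) \<longlongrightarrow> 0) F" "F \<noteq> bot"
  shows "(INF h\<in>A. f h) = 0"
proof (rule antisym)
  have "\<forall>\<^sub>F t in F. (INF h\<in>A. f h) \<le> f (u t)"
    using assms(2) by (intro always_eventually allI INF_lower)
  then show "(INF h\<in>A. f h) \<le> 0"
    using tendsto_le[OF assms(4) assms(3) tendsto_const] by blast
qed (use assms(1) in \<open>auto intro: INF_greatest\<close>)

lemma tendsto_sum_skl_term_0:
  assumes "finite I" "\<forall>k\<in>I. 0 \<le> P k" "\<forall>k\<in>I. ((\<lambda>t. Q t k) \<longlongrightarrow> P k) F"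
  shows "((\<lambda>t. \<Sum>k\<in>I. skl_term (P k) (Q t k)) \<longlongrightarrow> 0) F"
proof -
  have "\<forall>\<^sub>F t in F. \<forall>k\<in>I. P k = 0 \<or> 0 < Q t k"
  proof (rule eventually_ball_finite[OF assms(1)], intro ballI)
    fix k
    assume "k \<in> I"
    show "\<forall>\<^sub>F t in F. P k = 0 \<or> 0 < Q t k"
    proof (cases "P k = 0")
      case False
      then have "\<forall>\<^sub>F t in F. 0 < Q t k"
        using \<open>k \<in> I\<close> assms(2,3) by (intro order_tendstoD(1)) auto
      then show ?thesis
        by eventually_elim simp
    qed simp
  qed
  then have "\<forall>\<^sub>F t in F. ereal (\<Sum>k\<in>I. P k * ln (P k / Q t k)) = (\<Sum>k\<in>I. skl_term (P k) (Q t k))"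
    by eventually_elim (simp add: skl_term_eq_ereal)
  moreover have "((\<lambda>t. \<Sum>k\<in>I. P k * ln (P k / Q t k)) \<longlongrightarrow> 0) F"
  proof (rule tendsto_null_sum)
    fix k
    assume "k \<in> I"
    show "((\<lambda>t. P k * ln (P k / Q t k)) \<longlongrightarrow> 0) F"
    proof (cases "P k = 0")
      case False
      have "((\<lambda>t. P k * ln (P k / Q t k)) \<longlongrightarrow> P k * ln (P k / P k)) F"
        using \<open>k \<in> I\<close> assms(3) False by (intro tendsto_intros) auto
      then show ?thesis
        using False by simp
    qed simp
  qed
  then have "((\<lambda>t. ereal (\<Sum>k\<in>I. P k * ln (P k / Q t k))) \<longlongrightarrow> 0) F"
    by (simp add: zero_ereal_def)
  ultimately show ?thesis
    by (rule Lim_transform_eventually[rotated])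
qed

lemma tendsto_smooth: "(f \<longlongrightarrow> x) F \<Longrightarrow> ((\<lambda>t. smooth K \<alpha> (f t)) \<longlongrightarrow> smooth K \<alpha> x) F"
  unfolding smooth_def by (intro tendsto_intros)

lemma tendsto_DSKL_0:
  assumes "\<forall>k<K. 0 \<le> smooth K \<alpha> (p k)" "\<forall>k<K. ((\<lambda>t. q t k) \<longlongrightarrow> p k) F"
  shows "((\<lambda>t. DSKL K \<alpha> p (q t)) \<longlongrightarrow> 0) F"
  unfolding DSKL_def using assms
  by (intro tendsto_sum_skl_term_0) (auto intro: tendsto_smooth)

lemma qRL_zero: "qRL K 0 = qL K"
  by (simp add: qRL_def fun_eq_iff)

lemma DSKL_qL_INF_not_attained:
  fixes \<alpha> :: real
  assumes "2 \<le> K" "0 \<le> \<alpha>" "\<alpha> \<le> real K / (real K - 1)" "\<alpha> \<noteq> 1"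
  defines "D \<equiv> \<lambda>h. DSKL K \<alpha> (\<lambda>k. if k = 0 then 1 else 0) (qL K h)"
  shows "\<not> (\<exists>g. g (K - 1) = 0 \<and> D g = (INF h\<in>{h. h (K - 1) = 0}. D h))
      \<and> ((\<lambda>t. D (\<lambda>k. if k = 0 then t else 0)) \<longlongrightarrow> (INF h\<in>{h. h (K - 1) = 0}. D h)) at_top"
proof -
  define e :: "nat \<Rightarrow> real" where "e = (\<lambda>k. if k = 0 then 1 else 0)"
  have pre: "e \<in> smooth_pre K \<alpha>" "qL K h \<in> smooth_pre K \<alpha>" for h
    using assms(1) prob_simplex_subset_smooth_pre[OF assms(1-3)]
    by (auto simp: e_def indicator_in_prob_simplex qL_in_prob_simplex)
  have lim: "((\<lambda>t. D (\<lambda>k. if k = 0 then t else 0)) \<longlongrightarrow> 0) at_top"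
    unfolding D_def e_def[symmetric]
  proof (rule tendsto_DSKL_0)
    show "\<forall>k<K. 0 \<le> smooth K \<alpha> (e k)"
      using pre(1) by (simp add: smooth_pre_iff)
    show "\<forall>k<K. ((\<lambda>t. qL K (\<lambda>k. if k = 0 then t else 0) k) \<longlongrightarrow> e k) at_top"
      using assms(1) tendsto_qL_indicator_at_top[of K] by (simp add: e_def)
  qed
  have INF_0: "(INF h\<in>{h. h (K - 1) = 0}. D h) = 0"
    using assms(1) lim DSKL_nonneg[OF pre] unfolding D_def e_def
    by (intro INF_eq_0_if_tendsto[where u = "\<lambda>t k. if k = 0 then t else 0"]) auto
  have "D g \<noteq> 0" for g
  proof
    assume "D g = 0"
    then have "\<forall>k<K. e k = qL K g k"
      using DSKL_eq_0_iff[OF pre assms(4)] unfolding D_def e_def by simp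
    then have "qL K g 0 = 1"
      using assms(1) by (auto simp: e_def dest: spec[of _ 0])
    then show False
      using qL_less_one[OF assms(1), of 0 g] assms(1) by simp
  qed
  then show ?thesis
    using lim INF_0 by simp
qed

lemma DSKL_qRL_INF_attained_iff:
  fixes \<alpha> :: real
  assumes "2 \<le> K" "0 < \<alpha>" "\<alpha> < real K / (real K - 1)" "\<alpha> \<noteq> 1" "g (K - 1) = 0"
  defines "D \<equiv> \<lambda>h. DSKL K \<alpha> (\<lambda>k. if k = 0 then 1 else 0) (qRL K \<alpha> h)"
  shows "D g = (INF h\<in>{h. h (K - 1) = 0}. D h)
           \<longleftrightarrow> (\<forall>k<K. g k = (if k = 0 then ln (real K / \<alpha> + 1 - real K) else 0))"
proof -
  define e :: "nat \<Rightarrow> real" where "e = (\<lambda>k. if k = 0 then 1 else 0)"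
  define c where "c = real K / \<alpha> + 1 - real K"
  define g\<^sub>0 where "g\<^sub>0 = (\<lambda>k::nat. if k = 0 then ln c else 0)"
  have "e \<in> prob_simplex K"
    using assms(1) by (simp add: e_def indicator_in_prob_simplex)
  then have pre: "e \<in> smooth_pre K \<alpha>" "qRL K \<alpha> h \<in> smooth_pre K \<alpha>" for h
    using assms(1-4) prob_simplex_subset_smooth_pre[of K \<alpha>] qRL_in_smooth_pre[of K \<alpha> h] by auto
  have "e k = qRL K \<alpha> h k \<longleftrightarrow> qL K h k = smooth K \<alpha> (e k)" for h k
    using smooth_inj[OF assms(4), of K "e k" "qRL K \<alpha> h k"] smooth_qRL[OF assms(4)] by auto
  then have D_eq_0_iff: "D h = 0 \<longleftrightarrow> (\<forall>k<K. qL K h k = smooth K \<alpha> (e k))" for h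
    using DSKL_eq_0_iff[OF pre assms(4)] unfolding D_def e_def by simp
  have "\<alpha> * (real K - 1) < real K"
    using assms(1,3) by (simp add: less_divide_eq)
  then have "0 < c" "exp (ln c) + (real K - 1) = real K / \<alpha>"
    using assms(2) by (simp_all add: c_def field_simps)
  then have "qL K g\<^sub>0 k = smooth K \<alpha> (e k)" if "k < K" for k
    using assms(1,2) that by (simp add: g\<^sub>0_def qL_indicator smooth_def e_def c_def field_simps)
  then have "D g\<^sub>0 = 0"
    using D_eq_0_iff by simp
  moreover have "g\<^sub>0 \<in> {h. h (K - 1) = 0}"
    using assms(1) by (simp add: g\<^sub>0_def)
  ultimately have "(INF h\<in>{h. h (K - 1) = 0}. D h) = 0"
    using DSKL_nonneg[OF pre] unfolding D_def e_def
    by (intro antisym INF_greatest) (auto intro: INF_lower2)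
  then have "D g = (INF h\<in>{h. h (K - 1) = 0}. D h) \<longleftrightarrow> (\<forall>k<K. qL K g k = qL K g\<^sub>0 k)"
    using D_eq_0_iff \<open>\<And>k. k < K \<Longrightarrow> qL K g\<^sub>0 k = smooth K \<alpha> (e k)\<close> by auto
  also have "\<dots> \<longleftrightarrow> (\<exists>c. \<forall>k<K. g k = g\<^sub>0 k + c)"
    using assms(1) by (intro qL_eq_qL_iff) simp
  also have "\<dots> \<longleftrightarrow> (\<forall>k<K. g k = g\<^sub>0 k)"
  proof
    assume "\<exists>c. \<forall>k<K. g k = g\<^sub>0 k + c"
    then obtain d where "\<forall>k<K. g k = g\<^sub>0 k + d" ..
    moreover from this have "d = 0"
      using assms(1,5) by (auto simp: g\<^sub>0_def elim: allE[of _ "K - 1"])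
    ultimately show "\<forall>k<K. g k = g\<^sub>0 k"
      by simp
  qed auto
  finally show ?thesis
    by (simp add: g\<^sub>0_def c_def)
qed

lemma DSKL_qRL_INF_not_attained_at_bound:
  assumes "2 \<le> K"
  defines "\<alpha> \<equiv> real K / (real K - 1)"
  defines "D \<equiv> \<lambda>h. DSKL K \<alpha> (\<lambda>k. if k = 0 then 1 else 0) (qRL K \<alpha> h)"
  shows "\<not> (\<exists>g. g (K - 1) = 0 \<and> D g = (INF h\<in>{h. h (K - 1) = 0}. D h))
      \<and> ((\<lambda>t. D (\<lambda>k. if k = 0 then t else 0)) \<longlongrightarrow> (INF h\<in>{h. h (K - 1) = 0}. D h)) at_bot"
proof -
  define e :: "nat \<Rightarrow> real" where "e = (\<lambda>k. if k = 0 then 1 else 0)"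
  have "\<alpha> \<noteq> 1" "1 \<le> \<alpha>"
    using assms(1) one_le_div_pred[OF assms(1)] by (simp_all add: \<alpha>_def)
  have pre: "e \<in> smooth_pre K \<alpha>" "qRL K \<alpha> h \<in> smooth_pre K \<alpha>" for h
    using assms(1) \<open>\<alpha> \<noteq> 1\<close> \<open>1 \<le> \<alpha>\<close> prob_simplex_subset_smooth_pre[of K \<alpha>]
    by (auto simp: e_def \<alpha>_def indicator_in_prob_simplex qRL_in_smooth_pre)
  have smooth_e: "smooth K \<alpha> (e k) = (if k = 0 then 0 else 1 / (real K - 1))" for k
    using assms(1) by (simp add: smooth_def e_def \<alpha>_def field_simps)
  have lim: "((\<lambda>t. D (\<lambda>k. if k = 0 then t else 0)) \<longlongrightarrow> 0) at_bot"
    unfolding D_def e_def[symmetric]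
  proof (rule tendsto_DSKL_0)
    show "\<forall>k<K. 0 \<le> smooth K \<alpha> (e k)"
      using pre(1) by (simp add: smooth_pre_iff)
    have "((\<lambda>t. smooth_inv K \<alpha> (qL K (\<lambda>k. if k = 0 then t else 0) k))
            \<longlongrightarrow> smooth_inv K \<alpha> (smooth K \<alpha> (e k))) at_bot" if "k < K" for k
      unfolding smooth_inv_def smooth_e
      using assms(1) that \<open>\<alpha> \<noteq> 1\<close> by (intro tendsto_intros tendsto_qL_indicator_at_bot) auto
    then show "\<forall>k<K. ((\<lambda>t. qRL K \<alpha> (\<lambda>k. if k = 0 then t else 0) k) \<longlongrightarrow> e k) at_bot"
      using \<open>\<alpha> \<noteq> 1\<close> by (simp add: qRL_eq_smooth_inv smooth_inv_smooth)
  qed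
  have INF_0: "(INF h\<in>{h. h (K - 1) = 0}. D h) = 0"
    using assms(1) lim DSKL_nonneg[OF pre] unfolding D_def e_def
    by (intro INF_eq_0_if_tendsto[where u = "\<lambda>t k. if k = 0 then t else 0"]) auto
  have "D g \<noteq> 0" for g
  proof
    assume "D g = 0"
    then have "\<forall>k<K. e k = qRL K \<alpha> g k"
      using DSKL_eq_0_iff[OF pre \<open>\<alpha> \<noteq> 1\<close>] unfolding D_def e_def by simp
    then have "e 0 = qRL K \<alpha> g 0"
      using assms(1) by (auto dest: spec[of _ 0])
    then have "qL K g 0 = 0"
      using smooth_qRL[OF \<open>\<alpha> \<noteq> 1\<close>, of K g 0] smooth_e[of 0] by simp
    then show False
      using qL_pos[of K g 0] assms(1) by simp
  qed
  then show ?thesis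
    using lim INF_0 by simp
qed

section \<open>The reflection of the smoothing parameter\<close>

lemma smooth_reflect:
  assumes "2 \<le> K"
  shows "smooth K (real K - (real K - 1) * \<alpha>) ((1 - x) / (real K - 1)) = smooth K \<alpha> x"
proof -
  have "real K - 1 \<noteq> 0" "real K \<noteq> 0"
    using assms by auto
  then show ?thesis
    by (simp add: smooth_def field_simps)
qed

lemma reflect_parameter_ne_one:
  assumes "2 \<le> K" "\<alpha> \<noteq> 1"
  shows "real K - (real K - 1) * \<alpha> \<noteq> 1"
proof -
  have "real K - (real K - 1) * \<alpha> - 1 = (real K - 1) * (1 - \<alpha>)"
    by (simp add: algebra_simps)
  then show ?thesis
    using assms by auto
qed

lemma reflect_parameter_range:
  assumes "2 \<le> K" "1 < \<alpha>" "\<alpha> \<le> real K / (real K - 1)"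
  shows "0 \<le> real K - (real K - 1) * \<alpha>" "real K - (real K - 1) * \<alpha> < 1"
proof -
  have "(real K - 1) * \<alpha> \<le> real K"
    using assms(1,3) by (simp add: le_divide_eq mult.commute)
  then show "0 \<le> real K - (real K - 1) * \<alpha>"
    by simp
  have "(real K - 1) * 1 < (real K - 1) * \<alpha>"
    using assms(1,2) by (intro mult_strict_left_mono) auto
  then show "real K - (real K - 1) * \<alpha> < 1"
    by simp
qed

lemma smooth_pre_reflect:
  "2 \<le> K \<Longrightarrow> (\<lambda>k. (1 - p k) / (real K - 1)) \<in> smooth_pre K (real K - (real K - 1) * \<alpha>)
                 \<longleftrightarrow> p \<in> smooth_pre K \<alpha>"
  by (simp add: smooth_pre_iff smooth_reflect)

lemma DSKL_reflect:
  "2 \<le> K \<Longrightarrow> DSKL K (real K - (real K - 1) * \<alpha>)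
                (\<lambda>k. (1 - p k) / (real K - 1)) (\<lambda>k. (1 - q k) / (real K - 1)) = DSKL K \<alpha> p q"
  by (simp add: DSKL_def smooth_reflect)

lemma DSKL_qRL: "\<alpha> \<noteq> 1 \<Longrightarrow> DSKL K \<alpha> p (qRL K \<alpha> g) = (\<Sum>k<K. skl_term (smooth K \<alpha> (p k)) (qL K g k))"
  by (simp add: DSKL_def smooth_qRL)

lemma DSKL_reflect_qRL:
  assumes "2 \<le> K" "\<alpha> \<noteq> 1"
  shows "DSKL K (real K - (real K - 1) * \<alpha>) (\<lambda>k. (1 - p k) / (real K - 1))
           (qRL K (real K - (real K - 1) * \<alpha>) g) = DSKL K \<alpha> p (qRL K \<alpha> g)"
  using assms by (simp add: DSKL_qRL reflect_parameter_ne_one smooth_reflect)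

lemma DSKL_reflection:
  assumes "2 \<le> K" "1 < \<alpha>" "\<alpha> \<le> real K / (real K - 1)" "p \<in> smooth_pre K \<alpha>"
  shows "DSKL K \<alpha> p q = DSKL K (real K - (real K - 1) * \<alpha>)
                (\<lambda>k. (1 - p k) / (real K - 1)) (\<lambda>k. (1 - q k) / (real K - 1))
        \<and> DSKL K \<alpha> p (qRL K \<alpha> g) = DSKL K (real K - (real K - 1) * \<alpha>)
                (\<lambda>k. (1 - p k) / (real K - 1)) (qRL K (real K - (real K - 1) * \<alpha>) g)
        \<and> 0 \<le> real K - (real K - 1) * \<alpha> \<and> real K - (real K - 1) * \<alpha> < 1
        \<and> (\<lambda>k. (1 - p k) / (real K - 1)) \<in> smooth_pre K (real K - (real K - 1) * \<alpha>)"
  using assms reflect_parameter_range[OF assms(1-3)]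
  by (simp add: DSKL_reflect DSKL_reflect_qRL smooth_pre_reflect)

lemma sum_lessThan_two: "(\<Sum>k<2. f k) = f 0 + f (1::nat)"
  by (simp add: numeral_2_eq_2)

lemma qL_two_uminus:
  assumes "k < 2"
  shows "qL 2 (\<lambda>l. - g l) k = qL 2 g (1 - k)"
proof -
  have swap: "exp (- a) / (exp (- a) + exp (- b)) = exp b / (exp b + exp a)" for a b :: real
  proof -
    have "exp (- a) * (exp b + exp a) = exp b * (exp (- a) + exp (- b))"
      by (simp add: algebra_simps flip: exp_add)
    moreover have "0 < exp (- a) + exp (- b)" "0 < exp b + exp a"
      by (simp_all add: add_pos_pos)
    ultimately show ?thesis
      by (simp add: divide_simps)
  qed
  show ?thesis
    using assms swap[of "g 0" "g 1"] swap[of "g 1" "g 0"] less_2_cases[OF assms]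
    by (auto simp: qL_def sum_lessThan_two add.commute)
qed

lemma DSKL_cong:
  "(\<And>k. k < K \<Longrightarrow> p k = p' k) \<Longrightarrow> (\<And>k. k < K \<Longrightarrow> q k = q' k) \<Longrightarrow> DSKL K \<alpha> p q = DSKL K \<alpha> p' q'"
  by (simp add: DSKL_def)

lemma DSKL_two_swap: "DSKL 2 \<alpha> (\<lambda>k. p (1 - k)) (\<lambda>k. q (1 - k)) = DSKL 2 \<alpha> p q"
  by (simp add: DSKL_def sum_lessThan_two add.commute)

lemma two_complement_eq_swap:
  fixes v :: "nat \<Rightarrow> real"
  shows "v 0 + v 1 = 1 \<Longrightarrow> k < 2 \<Longrightarrow> 1 - v k = v (1 - k)"
  by (auto dest: less_2_cases)

lemma DSKL_two_class_reflection:
  assumes "1 < \<alpha>" "\<alpha> \<le> 2" "p \<in> smooth_pre 2 \<alpha>"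
  shows "DSKL 2 \<alpha> p (qL 2 g) = DSKL 2 (2 - \<alpha>) (\<lambda>k. 1 - p k) (qL 2 (\<lambda>k. - g k))
          \<and> DSKL 2 (2 - \<alpha>) (\<lambda>k. 1 - p k) (qL 2 (\<lambda>k. - g k)) = DSKL 2 (2 - \<alpha>) p (qL 2 g)
          \<and> DSKL 2 \<alpha> p (qRL 2 \<alpha> g) = DSKL 2 (2 - \<alpha>) (\<lambda>k. 1 - p k) (qRL 2 (2 - \<alpha>) g)
          \<and> DSKL 2 (2 - \<alpha>) (\<lambda>k. 1 - p k) (qRL 2 (2 - \<alpha>) g)
              = DSKL 2 (2 - \<alpha>) p (qRL 2 (2 - \<alpha>) (\<lambda>k. - g k))
          \<and> 0 \<le> 2 - \<alpha> \<and> 2 - \<alpha> < 1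
          \<and> (\<lambda>k. 1 - p k) \<in> smooth_pre 2 (2 - \<alpha>)"
proof -
  have "\<alpha> \<noteq> 1" "2 - \<alpha> \<noteq> 1"
    using assms(1) by auto
  have "p 0 + p 1 = 1" "qL 2 g 0 + qL 2 g 1 = 1"
    using smooth_pre_sum[OF assms(3) \<open>\<alpha> \<noteq> 1\<close>] sum_qL[of 2 g] by (simp_all add: sum_lessThan_two)
  then have p_swap: "1 - p k = p (1 - k)" and qL_swap: "1 - qL 2 g k = qL 2 (\<lambda>l. - g l) k"
    if "k < 2" for k
    using that two_complement_eq_swap[of p k] two_complement_eq_swap[of "qL 2 g" k]
    by (simp_all add: qL_two_uminus)
  have qRL_swap: "qRL 2 (2 - \<alpha>) (\<lambda>l. - g l) (1 - k) = qRL 2 (2 - \<alpha>) g k" if "k < 2" for k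
    using that by (simp add: qRL_eq_smooth_inv qL_two_uminus)
  have "DSKL 2 \<alpha> p (qL 2 g) = DSKL 2 (2 - \<alpha>) (\<lambda>k. 1 - p k) (\<lambda>k. 1 - qL 2 g k)"
    using DSKL_reflect[of 2 \<alpha> p "qL 2 g"] by simp
  also have "\<dots> = DSKL 2 (2 - \<alpha>) (\<lambda>k. 1 - p k) (qL 2 (\<lambda>k. - g k))"
    by (simp add: DSKL_def qL_swap)
  finally have 1: "DSKL 2 \<alpha> p (qL 2 g) = DSKL 2 (2 - \<alpha>) (\<lambda>k. 1 - p k) (qL 2 (\<lambda>k. - g k))" .
  have "DSKL 2 (2 - \<alpha>) (\<lambda>k. 1 - p k) (qL 2 (\<lambda>k. - g k))
          = DSKL 2 (2 - \<alpha>) (\<lambda>k. p (1 - k)) (\<lambda>k. qL 2 g (1 - k))"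
    by (simp add: DSKL_def p_swap qL_two_uminus)
  then have 2: "DSKL 2 (2 - \<alpha>) (\<lambda>k. 1 - p k) (qL 2 (\<lambda>k. - g k)) = DSKL 2 (2 - \<alpha>) p (qL 2 g)"
    using DSKL_two_swap[of "2 - \<alpha>" p "qL 2 g"] by simp
  have 3: "DSKL 2 \<alpha> p (qRL 2 \<alpha> g) = DSKL 2 (2 - \<alpha>) (\<lambda>k. 1 - p k) (qRL 2 (2 - \<alpha>) g)"
    using DSKL_reflect_qRL[of 2 \<alpha> p g] \<open>\<alpha> \<noteq> 1\<close> by simp
  have "DSKL 2 (2 - \<alpha>) (\<lambda>k. 1 - p k) (qRL 2 (2 - \<alpha>) g)
          = DSKL 2 (2 - \<alpha>) (\<lambda>k. p (1 - k)) (\<lambda>k. qRL 2 (2 - \<alpha>) (\<lambda>l. - g l) (1 - k))"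
    by (rule DSKL_cong) (use p_swap qRL_swap in auto)
  then have 4: "DSKL 2 (2 - \<alpha>) (\<lambda>k. 1 - p k) (qRL 2 (2 - \<alpha>) g)
                 = DSKL 2 (2 - \<alpha>) p (qRL 2 (2 - \<alpha>) (\<lambda>k. - g k))"
    using DSKL_two_swap[of "2 - \<alpha>" p "qRL 2 (2 - \<alpha>) (\<lambda>k. - g k)"] by simp
  have "(\<lambda>k. 1 - p k) \<in> smooth_pre 2 (2 - \<alpha>)"
    using smooth_pre_reflect[of 2 p \<alpha>] assms(3) by simp
  then show ?thesis
    using 1 2 3 4 assms(1,2) by simp
qed

theorem theorem1:
  fixes K :: nat
  assumes K2: "K \<ge> 2"
  shows
  \<comment> \<open>(B1)\<close>
  "(\<forall>\<alpha>::real. 0 \<le> \<alpha> \<and> \<alpha> < 1 \<longrightarrow>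
      (\<forall>k<K. (\<lambda>g. qRL K \<alpha> g k) ` UNIV \<subseteq>
                 {- \<alpha> / (real K * (1 - \<alpha>)) .. (real K - \<alpha>) / (real K * (1 - \<alpha>))}
            \<and> closure ((\<lambda>g. qRL K \<alpha> g k) ` UNIV) =
                 {- \<alpha> / (real K * (1 - \<alpha>)) .. (real K - \<alpha>) / (real K * (1 - \<alpha>))})
      \<and> {0..1} \<subseteq> {- \<alpha> / (real K * (1 - \<alpha>)) .. (real K - \<alpha>) / (real K * (1 - \<alpha>))})
 \<and> (\<forall>\<alpha>::real. 1 < \<alpha> \<and> \<alpha> \<le> real K / (real K - 1) \<longrightarrow>
      (\<forall>k<K. (\<lambda>g. qRL K \<alpha> g k) ` UNIV \<subseteq>
                 {(real K - \<alpha>) / (real K * (1 - \<alpha>)) .. - \<alpha> / (real K * (1 - \<alpha>))}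
            \<and> closure ((\<lambda>g. qRL K \<alpha> g k) ` UNIV) =
                 {(real K - \<alpha>) / (real K * (1 - \<alpha>)) .. - \<alpha> / (real K * (1 - \<alpha>))})
      \<and> {0..1} \<subseteq> {(real K - \<alpha>) / (real K * (1 - \<alpha>)) .. - \<alpha> / (real K * (1 - \<alpha>))})
  \<comment> \<open>(B2)\<close>
 \<and> (\<forall>\<alpha>::real. \<forall>g. \<alpha> \<noteq> 1 \<longrightarrow> (\<Sum>k<K. qRL K \<alpha> g k) = 1)
  \<comment> \<open>(B3)\<close>
 \<and> (\<forall>\<alpha>::real. (0 \<le> \<alpha> \<and> \<alpha> < 1) \<or> (1 < \<alpha> \<and> \<alpha> \<le> real K / (real K - 1)) \<longrightarrow>
      (\<forall>p q. p \<in> smooth_pre K \<alpha> \<longrightarrow> q \<in> smooth_pre K \<alpha> \<longrightarrow>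
          DSKL K \<alpha> p q \<ge> 0 \<and> (DSKL K \<alpha> p q = 0 \<longleftrightarrow> (\<forall>k<K. p k = q k))))
 \<and> (\<forall>p q. p \<in> smooth_pre K 1 \<longrightarrow> q \<in> smooth_pre K 1 \<longrightarrow> DSKL K 1 p q = 0)
  \<comment> \<open>(B4)\<close>
 \<and> (\<forall>\<alpha>::real. 0 \<le> \<alpha> \<and> \<alpha> \<le> real K / (real K - 1) \<longrightarrow>
      (\<forall>p1 p2 q1 q2 r. p1 \<in> smooth_pre K \<alpha> \<longrightarrow> p2 \<in> smooth_pre K \<alpha> \<longrightarrow>
          q1 \<in> smooth_pre K \<alpha> \<longrightarrow> q2 \<in> smooth_pre K \<alpha> \<longrightarrow> 0 \<le> r \<longrightarrow> r \<le> 1 \<longrightarrow>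
          DSKL K \<alpha> (\<lambda>k. r * p1 k + (1 - r) * p2 k) (\<lambda>k. r * q1 k + (1 - r) * q2 k)
            \<le> ereal r * DSKL K \<alpha> p1 q1 + ereal (1 - r) * DSKL K \<alpha> p2 q2))
  \<comment> \<open>(B5)\<close>
 \<and> (\<forall>\<alpha>::real. (0 \<le> \<alpha> \<and> \<alpha> < 1) \<or> (1 < \<alpha> \<and> \<alpha> \<le> real K / (real K - 1)) \<longrightarrow>
      \<not> (\<exists>g. g (K - 1) = 0 \<and>
             DSKL K \<alpha> (\<lambda>k. if k = 0 then 1 else 0) (qL K g)
               = (INF h\<in>{h. h (K - 1) = 0}. DSKL K \<alpha> (\<lambda>k. if k = 0 then 1 else 0) (qL K h)))
      \<and> ((\<lambda>t. DSKL K \<alpha> (\<lambda>k. if k = 0 then 1 else 0) (qL K (\<lambda>k. if k = 0 then t else 0)))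
           \<longlongrightarrow> (INF h\<in>{h. h (K - 1) = 0}. DSKL K \<alpha> (\<lambda>k. if k = 0 then 1 else 0) (qL K h))) at_top)
  \<comment> \<open>(B6), alpha = 0\<close>
 \<and> (\<not> (\<exists>g. g (K - 1) = 0 \<and>
             DSKL K 0 (\<lambda>k. if k = 0 then 1 else 0) (qRL K 0 g)
               = (INF h\<in>{h. h (K - 1) = 0}. DSKL K 0 (\<lambda>k. if k = 0 then 1 else 0) (qRL K 0 h)))
      \<and> ((\<lambda>t. DSKL K 0 (\<lambda>k. if k = 0 then 1 else 0) (qRL K 0 (\<lambda>k. if k = 0 then t else 0)))
           \<longlongrightarrow> (INF h\<in>{h. h (K - 1) = 0}. DSKL K 0 (\<lambda>k. if k = 0 then 1 else 0) (qRL K 0 h))) at_top)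
  \<comment> \<open>(B6), alpha in (0,1) or (1, K/(K-1))\<close>
 \<and> (\<forall>\<alpha>::real. (0 < \<alpha> \<and> \<alpha> < 1) \<or> (1 < \<alpha> \<and> \<alpha> < real K / (real K - 1)) \<longrightarrow>
      (\<forall>g. g (K - 1) = 0 \<longrightarrow>
          (DSKL K \<alpha> (\<lambda>k. if k = 0 then 1 else 0) (qRL K \<alpha> g)
             = (INF h\<in>{h. h (K - 1) = 0}. DSKL K \<alpha> (\<lambda>k. if k = 0 then 1 else 0) (qRL K \<alpha> h))
           \<longleftrightarrow> (\<forall>k<K. g k = (if k = 0 then ln (real K / \<alpha> + 1 - real K) else 0)))))
  \<comment> \<open>(B6), alpha = K/(K-1)\<close>
 \<and> (let \<alpha> = real K / (real K - 1) in
     \<not> (\<exists>g. g (K - 1) = 0 \<and>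
             DSKL K \<alpha> (\<lambda>k. if k = 0 then 1 else 0) (qRL K \<alpha> g)
               = (INF h\<in>{h. h (K - 1) = 0}. DSKL K \<alpha> (\<lambda>k. if k = 0 then 1 else 0) (qRL K \<alpha> h)))
      \<and> ((\<lambda>t. DSKL K \<alpha> (\<lambda>k. if k = 0 then 1 else 0) (qRL K \<alpha> (\<lambda>k. if k = 0 then t else 0)))
           \<longlongrightarrow> (INF h\<in>{h. h (K - 1) = 0}. DSKL K \<alpha> (\<lambda>k. if k = 0 then 1 else 0) (qRL K \<alpha> h))) at_bot)
  \<comment> \<open>(B7)\<close>
 \<and> (\<forall>\<alpha>::real. 1 < \<alpha> \<and> \<alpha> \<le> real K / (real K - 1) \<longrightarrow>
      (\<forall>p q g. p \<in> smooth_pre K \<alpha> \<longrightarrow> q \<in> smooth_pre K \<alpha> \<longrightarrow>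
          DSKL K \<alpha> p q = DSKL K (real K - (real K - 1) * \<alpha>)
                (\<lambda>k. (1 - p k) / (real K - 1)) (\<lambda>k. (1 - q k) / (real K - 1))
        \<and> DSKL K \<alpha> p (qRL K \<alpha> g) = DSKL K (real K - (real K - 1) * \<alpha>)
                (\<lambda>k. (1 - p k) / (real K - 1)) (qRL K (real K - (real K - 1) * \<alpha>) g)
        \<and> 0 \<le> real K - (real K - 1) * \<alpha> \<and> real K - (real K - 1) * \<alpha> < 1
        \<and> (\<lambda>k. (1 - p k) / (real K - 1)) \<in> smooth_pre K (real K - (real K - 1) * \<alpha>)))
  \<comment> \<open>(B8)\<close>
 \<and> (K = 2 \<longrightarrow>
      (\<forall>\<alpha>::real. 1 < \<alpha> \<and> \<alpha> \<le> 2 \<longrightarrow>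
        (\<forall>p g. p \<in> smooth_pre K \<alpha> \<longrightarrow>
            DSKL K \<alpha> p (qL K g) = DSKL K (2 - \<alpha>) (\<lambda>k. 1 - p k) (qL K (\<lambda>k. - g k))
          \<and> DSKL K (2 - \<alpha>) (\<lambda>k. 1 - p k) (qL K (\<lambda>k. - g k)) = DSKL K (2 - \<alpha>) p (qL K g)
          \<and> DSKL K \<alpha> p (qRL K \<alpha> g) = DSKL K (2 - \<alpha>) (\<lambda>k. 1 - p k) (qRL K (2 - \<alpha>) g)
          \<and> DSKL K (2 - \<alpha>) (\<lambda>k. 1 - p k) (qRL K (2 - \<alpha>) g) = DSKL K (2 - \<alpha>) p (qRL K (2 - \<alpha>) (\<lambda>k. - g k))
          \<and> 0 \<le> 2 - \<alpha> \<and> 2 - \<alpha> < 1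
          \<and> (\<lambda>k. 1 - p k) \<in> smooth_pre K (2 - \<alpha>))))"
proof -
  have "1 \<le> real K / (real K - 1)"
    using one_le_div_pred[OF K2] .
  then show ?thesis
    apply (intro conjI)
    subgoal using qRL_coordinate_bounds_below_one[OF K2] by blast
    subgoal using qRL_coordinate_bounds_above_one[OF K2] by blast
    subgoal using K2 by (simp add: sum_qRL)
    subgoal using DSKL_nonneg DSKL_eq_0_iff by (metis less_irrefl)
    subgoal by (simp add: DSKL_smooth_one)
    subgoal using DSKL_convex by blast
    subgoal using DSKL_qL_INF_not_attained[OF K2] by auto
    subgoal using DSKL_qL_INF_not_attained[OF K2, of 0] by (simp add: qRL_zero)
    subgoal using DSKL_qL_INF_not_attained[OF K2, of 0] by (simp add: qRL_zero)
    subgoal using DSKL_qRL_INF_attained_iff[OF K2] by auto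
    subgoal using DSKL_qRL_INF_not_attained_at_bound[OF K2] by (simp add: Let_def)
    subgoal using DSKL_reflection[OF K2] by blast
    subgoal using DSKL_two_class_reflection by auto
    done
qed

end
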